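(* For every rational $c$ for which $f_c(x)=x^2+c$ has a rational $3$-cycle, the numerator of the rational number $c^3+2c^2+c+1$ (in lowest terms) is divisible by at least three distinct primes.
   Context: A rational $3$-cycle of $f_c$ is the orbit of a rational point of minimal period $3$ under $f_c$. *)

theory Defs
  imports Complex_Main "HOL-Computational_Algebra.Primes"
begin

definition fc :: "rat \<Rightarrow> rat \<Rightarrow> rat" where
  "fc c x = x ^ 2 + c"

definition minimal_period :: "('a \<Rightarrow> 'a) \<Rightarrow> nat \<Rightarrow> 'a \<Rightarrow> bool" where
  "minimal_period f n x \<longleftrightarrow> n > 0 \<and> (f ^^ n) x = x \<and> (\<forall>k. 0 < k \<and> k < n \<longrightarrow> (f ^^ k) x \<noteq> x)"

definition has_rational_3_cycle :: "rat \<Rightarrow> bool" where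
  "has_rational_3_cycle c \<longleftrightarrow> (\<exists>x::rat. minimal_period (fc c) 3 x)"

definition rat_numerator :: "rat \<Rightarrow> int" where
  "rat_numerator q = fst (quotient_of q)"

end

(*
  A rational c admits a rational 3-cycle x0 -> x1 -> x2 only if, with a = x0 + x1,
  c = -(a^6 + 2a^5 + 4a^4 + 8a^3 + 9a^2 + 4a + 1) / (4a^2 (a + 1)^2), a \<noteq> 0, -1.
  For a = m/n in lowest terms, (c^3 + 2c^2 + c + 1) D^3 = F1 F2 F3 G with D = 4m^2n^2(m + n)^2
  and binary forms F1, F2, F3 of degree 3 and G of degree 9. At n = 0, m = 0 and m = -n each
  form is a unit times a power of m or n, so it is coprime to m n (m + n), hence odd and
  coprime to D, and the product divides the numerator. Bezout combinations of any two forms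
  equal 2^j n^k and 2^j m^k, so the forms are pairwise coprime. No two of them are units:
  otherwise F = \<plusminus>F' or G = \<plusminus>F^3, which makes a binary form vanish at the coprime pair (m, n),
  so m and n divide its extreme coefficients and a finite check remains. Three pairwise coprime
  non-units among the four factors supply three distinct primes.
*)

theory Submission
  imports Defs
begin

lemma rational_3_cycle_parametrization:
  assumes "has_rational_3_cycle c"
  obtains a :: rat where "a \<noteq> 0" "a \<noteq> -1"
    "4*a^2*(1+a)^2*c = -(a^6+2*a^5+4*a^4+8*a^3+9*a^2+4*a+1)"
proof -
  obtain x0 where period: "minimal_period (fc c) 3 x0"
    using assms unfolding has_rational_3_cycle_def by blast
  define x1 where "x1 = x0^2 + c"
  define x2 where "x2 = x1^2 + c"
  have "(fc c ^^ 1) x0 = x1" "(fc c ^^ 2) x0 = x2" "(fc c ^^ 3) x0 = x2^2 + c"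
    by (simp_all add: fc_def x1_def x2_def numeral_2_eq_2 numeral_3_eq_3)
  with period have x0: "x0 = x2^2 + c" and "x1 \<noteq> x0"
    unfolding minimal_period_def by force+
  define a where "a = x0 + x1"
  define b where "b = x1 + x2"
  define d where "d = x2 + x0"
  have "x1 - x2 = (x0 - x1)*a" "x2 - x0 = (x1 - x2)*b" "x0 - x1 = (x2 - x0)*d"
    unfolding a_def b_def d_def using x0 x1_def x2_def by algebra+
  then have "(x0 - x1)*(1 + a + a*b) = 0" "(x0 - x1)*(1 - a*b*d) = 0"
    by algebra+
  with \<open>x1 \<noteq> x0\<close> have ab: "1 + a + a*b = 0" and abd: "a*b*d = 1"
    by simp_all
  have "a \<noteq> 0" using abd by auto
  moreover have "a \<noteq> -1" using ab abd by auto
  moreover have "4*a^2*(1+a)^2*c = -(a^6+2*a^5+4*a^4+8*a^3+9*a^2+4*a+1)"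
  proof -
    have "2*x0 = a + d - b" "c = x1 - x0^2" unfolding a_def b_def d_def x1_def by simp_all
    then show ?thesis using ab abd a_def by algebra
  qed
  ultimately show ?thesis using that by blast
qed

definition c_num :: "int \<Rightarrow> int \<Rightarrow> int" where
  "c_num m n = m^6 + 2*m^5*n + 4*m^4*n^2 + 8*m^3*n^3 + 9*m^2*n^4 + 4*m*n^5 + n^6"

definition c_den :: "int \<Rightarrow> int \<Rightarrow> int" where
  "c_den m n = 4*m^2*n^2*(m + n)^2"

lemma rational_3_cycle_integer_parametrization:
  assumes "has_rational_3_cycle c"
  obtains m n :: int where "coprime m n" "n > 0" "m + n \<noteq> 0" "m \<noteq> 0"
    "of_int (c_den m n) * c = - of_int (c_num m n)"
proof -
  obtain a where a: "a \<noteq> 0" "a \<noteq> -1"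
    "4*a^2*(1+a)^2*c = -(a^6+2*a^5+4*a^4+8*a^3+9*a^2+4*a+1)"
    using rational_3_cycle_parametrization[OF assms] by blast
  obtain m n where mn: "quotient_of a = (m, n)" by (cases "quotient_of a")
  have "n > 0" "coprime m n" "a = of_int m / of_int n"
    using quotient_of_denom_pos[OF mn] quotient_of_coprime[OF mn] quotient_of_div[OF mn] .
  then have na: "of_int n * a = of_int m" by simp
  have "m + n \<noteq> 0"
  proof
    assume "m + n = 0"
    then have "m = - n" by simp
    then have "a = -1" using \<open>a = of_int m / of_int n\<close> \<open>n > 0\<close> by simp
    with a(2) show False ..
  qed
  moreover have "m \<noteq> 0" using a(1) \<open>a = of_int m / of_int n\<close> by auto
  moreover have "of_int (c_den m n) * c = - of_int (c_num m n)"
    unfolding c_den_def c_num_def of_int_mult of_int_add of_int_power of_int_numeral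
    using a(3) na by algebra
  ultimately show ?thesis using that \<open>coprime m n\<close> \<open>n > 0\<close> by blast
qed

lemma dvd_rat_numerator:
  fixes v :: rat and a b :: int
  assumes "v * of_int b = of_int a" "b \<noteq> 0" "coprime a b"
  shows "a dvd rat_numerator v"
proof -
  obtain p q where pq: "quotient_of v = (p, q)" by (cases "quotient_of v")
  have "q > 0" "v = of_int p / of_int q"
    using quotient_of_denom_pos[OF pq] quotient_of_div[OF pq] .
  with assms(1) have "of_int (p * b) = (of_int (a * q) :: rat)"
    by (simp add: field_simps)
  then have "a dvd p * b" by (metis dvd_triv_left of_int_eq_iff)
  with assms(3) have "a dvd p" by (simp add: coprime_dvd_mult_left_iff)
  then show ?thesis unfolding rat_numerator_def pq by simp
qed

definition F1 :: "int \<Rightarrow> int \<Rightarrow> int" where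
  "F1 m n = m^3 + 2*m^2*n + m*n^2 + n^3"

definition F2 :: "int \<Rightarrow> int \<Rightarrow> int" where
  "F2 m n = m^3 - m*n^2 - n^3"

definition F3 :: "int \<Rightarrow> int \<Rightarrow> int" where
  "F3 m n = m^3 + 2*m^2*n + 3*m*n^2 + n^3"

definition G :: "int \<Rightarrow> int \<Rightarrow> int" where
  "G m n = - (m^9) - 2*m^8*n - m^7*n^2 - 9*m^6*n^3 - 19*m^5*n^4
    + 26*m^3*n^6 + 21*m^2*n^7 + 7*m*n^8 + n^9"

lemma cycle_cubic_factorization:
  fixes c :: "'a :: comm_ring_1"
  assumes "of_int (c_den m n) * c = - of_int (c_num m n)"
  shows "(c^3 + 2*c^2 + c + 1) * of_int (c_den m n ^ 3) = of_int (F1 m n * F2 m n * F3 m n * G m n)"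
proof -
  define P where "P = c_num m n"
  define D where "D = c_den m n"
  have factorization: "- (P^3) + 2*P^2*D - P*D^2 + D^3 = F1 m n * F2 m n * F3 m n * G m n"
    unfolding P_def D_def c_num_def c_den_def F1_def F2_def F3_def G_def by algebra
  have "of_int P = - (of_int D * c)"
    using assms unfolding P_def D_def by simp
  then have "(c^3 + 2*c^2 + c + 1) * of_int (D^3) = of_int (- (P^3) + 2*P^2*D - P*D^2 + D^3)"
    by (simp add: algebra_simps power2_eq_square power3_eq_cube)
  with factorization show ?thesis unfolding D_def by simp
qed

lemma coprime_unit_power_add_mult:
  fixes a b e u :: "'a :: semiring_gcd"
  assumes "coprime a b" "is_unit e"
  shows "coprime (e * a^k + b * u) b"
proof -
  have "gcd b (u * b + e * a^k) = gcd b (e * a^k)" by (rule gcd_add_mult)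
  moreover have "coprime (e * a^k) b" using assms by (simp add: is_unit_left_imp_coprime)
  ultimately show ?thesis by (simp add: coprime_iff_gcd_eq_1 gcd.commute ac_simps del: gcd_add_mult)
qed

lemma coprime_c_den:
  fixes m n x :: int
  assumes "coprime x (m * n * (m + n))"
  shows "odd x" "coprime x (c_den m n)"
proof -
  have "even (m * n * (m + n))" by auto
  then show "odd x" using coprime_common_divisor[OF assms, of 2] by auto
  then have "coprime x 2" by simp
  moreover have "c_den m n = 2^2 * (m * n * (m + n))^2" unfolding c_den_def by algebra
  ultimately show "coprime x (c_den m n)" using assms
    by (simp only: coprime_mult_right_iff coprime_power_right_iff) simp
qed

lemma coprime_binary_form:
  fixes x m n e1 e2 e3 :: int
  assumes "coprime m n" "is_unit e1" "is_unit e2" "is_unit e3"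
    and "x = e1 * m^k + n * u" "x = e2 * n^k + m * v" "x = e3 * n^k + (m + n) * w"
  shows "coprime x (m * n * (m + n))"
proof -
  have "coprime n (m + n)"
    using assms(1) by (metis add.commute coprime_iff_gcd_eq_1 gcd.commute gcd_add2)
  then show ?thesis
    using coprime_unit_power_add_mult[of m n e1 k u] coprime_unit_power_add_mult[of n m e2 k v]
      coprime_unit_power_add_mult[of n "m + n" e3 k w] assms
    by (simp add: coprime_commute)
qed

lemma coprime_F1:
  assumes "coprime m n"
  shows "coprime (F1 m n) (m * n * (m + n))"
proof (rule coprime_binary_form)
  show "F1 m n = 1 * m^3 + n * (2*m^2 + m*n + n^2)" unfolding F1_def by algebra
  show "F1 m n = 1 * n^3 + m * (m^2 + 2*m*n + n^2)" unfolding F1_def by algebra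
  show "F1 m n = 1 * n^3 + (m + n) * ((m + n)^2 - (m + n)*n)" unfolding F1_def by algebra
qed (simp_all add: assms)

lemma coprime_F2:
  assumes "coprime m n"
  shows "coprime (F2 m n) (m * n * (m + n))"
proof (rule coprime_binary_form)
  show "F2 m n = 1 * m^3 + n * (- (m*n) - n^2)" unfolding F2_def by algebra
  show "F2 m n = (-1) * n^3 + m * (m^2 - n^2)" unfolding F2_def by algebra
  show "F2 m n = (-1) * n^3 + (m + n) * ((m + n)^2 - 3*(m + n)*n + 2*n^2)"
    unfolding F2_def by algebra
qed (simp_all add: assms)

lemma coprime_F3:
  assumes "coprime m n"
  shows "coprime (F3 m n) (m * n * (m + n))"
proof (rule coprime_binary_form)
  show "F3 m n = 1 * m^3 + n * (2*m^2 + 3*m*n + n^2)" unfolding F3_def by algebra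
  show "F3 m n = 1 * n^3 + m * (m^2 + 2*m*n + 3*n^2)" unfolding F3_def by algebra
  show "F3 m n = (-1) * n^3 + (m + n) * ((m + n)^2 - (m + n)*n + 2*n^2)" unfolding F3_def by algebra
qed (simp_all add: assms)

lemma coprime_G:
  assumes "coprime m n"
  shows "coprime (G m n) (m * n * (m + n))"
proof (rule coprime_binary_form)
  show "G m n = (-1) * m^9 + n * (- (2*m^8) - m^7*n - 9*m^6*n^2 - 19*m^5*n^3
      + 26*m^3*n^5 + 21*m^2*n^6 + 7*m*n^7 + n^8)"
    unfolding G_def by algebra
  show "G m n = 1 * n^9 + m * (- (m^8) - 2*m^7*n - m^6*n^2 - 9*m^5*n^3 - 19*m^4*n^4
      + 26*m^2*n^6 + 21*m*n^7 + 7*n^8)"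
    unfolding G_def by algebra
  show "G m n = (-1) * n^9 + (m + n) * (- ((m + n)^8) + 7*(m + n)^7*n - 21*(m + n)^6*n^2
      + 26*(m + n)^5*n^3 - 19*(m + n)^3*n^5 + 9*(m + n)^2*n^6 - (m + n)*n^7 + 2*n^8)"
    unfolding G_def by algebra
qed (simp_all add: assms)

lemma coprime_if_combinations:
  fixes x y m n :: int
  assumes "coprime m n" "odd x"
    and "u * x + v * y = 2^j * n^k" "u' * x + v' * y = 2^j * m^k"
  shows "coprime x y"
proof (rule coprimeI)
  fix d assume d: "d dvd x" "d dvd y"
  have "coprime d (2^j)" using d(1) \<open>odd x\<close> by (auto intro: coprime_imp_coprime dest: dvd_trans)
  moreover have "d dvd 2^j * n^k" "d dvd 2^j * m^k"
    using d unfolding assms(3,4)[symmetric] by simp_all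
  ultimately have "d dvd n^k" "d dvd m^k" by (simp_all add: coprime_dvd_mult_right_iff)
  then show "is_unit d" using coprime_common_divisor[of "m^k" "n^k"] assms(1) by simp
qed

lemma coprime_F1_F2:
  assumes "coprime m n"
  shows "coprime (F1 m n) (F2 m n)"
proof (rule coprime_if_combinations[OF assms])
  show "odd (F1 m n)" using coprime_c_den(1)[OF coprime_F1[OF assms]] .
  show "(- (m^2) + 2*n^2) * F1 m n + (m^2 + 2*m*n) * F2 m n = 2^1 * n^5"
    unfolding F1_def F2_def by algebra
  show "(n^2) * F1 m n + (2*m^2 + n^2) * F2 m n = 2^1 * m^5"
    unfolding F1_def F2_def by algebra
qed

lemma coprime_F1_F3:
  assumes "coprime m n"
  shows "coprime (F1 m n) (F3 m n)"
proof (rule coprime_if_combinations[OF assms])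
  show "odd (F1 m n)" using coprime_c_den(1)[OF coprime_F1[OF assms]] .
  show "(m^2 + 2*m*n + 3*n^2) * F1 m n + (- (m^2) - 2*m*n - n^2) * F3 m n = 2^1 * n^5"
    unfolding F1_def F3_def by algebra
  show "(- (m^2) - 5*m*n - 2*n^2) * F1 m n + (3*m^2 + m*n + 2*n^2) * F3 m n = 2^1 * m^5"
    unfolding F1_def F3_def by algebra
qed

lemma coprime_F1_G:
  assumes "coprime m n"
  shows "coprime (F1 m n) (G m n)"
proof (rule coprime_if_combinations[OF assms])
  show "odd (F1 m n)" using coprime_c_den(1)[OF coprime_F1[OF assms]] .
  show "(m^7*n + 8*m^4*n^4 + 3*m^3*n^5 - 14*m^2*n^6 - 9*m*n^7 + 8*n^8) * F1 m n
      + (m*n) * G m n = 2^3 * n^11"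
    unfolding F1_def G_def by algebra
  show "(273*m^8 + 49*m^7*n + 175*m^6*n^2 + 2080*m^5*n^3 + 1387*m^4*n^4 - 2435*m^3*n^5
      - 2618*m^2*n^6 - 971*m*n^7 - 151*n^8) * F1 m n
      + (265*m^2 + 65*m*n + 151*n^2) * G m n = 2^3 * m^11"
    unfolding F1_def G_def by algebra
qed

lemma coprime_F2_F3:
  assumes "coprime m n"
  shows "coprime (F2 m n) (F3 m n)"
proof (rule coprime_if_combinations[OF assms])
  show "odd (F2 m n)" using coprime_c_den(1)[OF coprime_F2[OF assms]] .
  show "(- (2*m^2) - 3*m*n - 4*n^2) * F2 m n + (2*m^2 - m*n - 2*n^2) * F3 m n = 2^1 * n^5"
    unfolding F2_def F3_def by algebra
  show "(m^2 - 2*m*n - n^2) * F2 m n + (m^2 - n^2) * F3 m n = 2^1 * m^5"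
    unfolding F2_def F3_def by algebra
qed

lemma coprime_F2_G:
  assumes "coprime m n"
  shows "coprime (F2 m n) (G m n)"
proof (rule coprime_if_combinations[OF assms])
  show "odd (F2 m n)" using coprime_c_den(1)[OF coprime_F2[OF assms]] .
  show "(2*m^8 + 2*m^7*n - m^6*n^2 + 18*m^5*n^3 + 20*m^4*n^4 - 30*m^3*n^5 - 33*m^2*n^6
      - 9*n^8) * F2 m n
      + (2*m^2 - 2*m*n - n^2) * G m n = 2^3 * n^11"
    unfolding F2_def G_def by algebra
  show "(7*m^8 - 3*m^7*n + 4*m^6*n^2 - 6*m^5*n^3 - 27*m^4*n^4 - 21*m^3*n^5 - 7*m^2*n^6
      - m*n^7) * F2 m n
      + (- (m^2) - m*n) * G m n = 2^3 * m^11"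
    unfolding F2_def G_def by algebra
qed

lemma coprime_F3_G:
  assumes "coprime m n"
  shows "coprime (F3 m n) (G m n)"
proof (rule coprime_if_combinations[OF assms])
  show "odd (F3 m n)" using coprime_c_den(1)[OF coprime_F3[OF assms]] .
  show "(151*m^8 + 237*m^7*n + 49*m^6*n^2 + 1338*m^5*n^3 + 2293*m^4*n^4 - 987*m^3*n^5
      - 3500*m^2*n^6 - 1665*m*n^7 - 343*n^8) * F3 m n
      + (151*m^2 + 237*m*n + 351*n^2) * G m n = 2^3 * n^11"
    unfolding F3_def G_def by algebra
  show "(11*m^8 - 10*m^7*n + 4*m^6*n^2 + 48*m^5*n^3 + 15*m^4*n^4 - 46*m^3*n^5
      - 41*m^2*n^6 - 14*m*n^7 - 2*n^8) * F3 m n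
      + (3*m^2 + 6*m*n + 2*n^2) * G m n = 2^3 * m^11"
    unfolding F3_def G_def by algebra
qed

lemma int_units_eq_power_or_neg_power:
  fixes x y :: int
  assumes "is_unit x" "is_unit y"
  shows "x = y^k \<or> x = - (y^k)"
proof -
  have "\<bar>x\<bar> = 1" "\<bar>y^k\<bar> = 1" using assms by (simp_all add: power_abs)
  then show ?thesis by arith
qed

lemma pos_definite_quadratic:
  fixes m n :: int
  assumes "n \<noteq> 0"
  shows "m^2 + m*n + n^2 > 0"
proof -
  have "2 * (m^2 + m*n + n^2) = (m + n)^2 + m^2 + n^2" by algebra
  moreover have "n^2 > 0" using assms by simp
  ultimately show ?thesis by (smt (verit) zero_le_power2)
qed

lemma coprime_form_zero_bound:
  fixes m n a b s t :: int
  assumes "coprime m n" "a * n^k = m * s" "b * m^l = n * t" "a \<noteq> 0" "b \<noteq> 0"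
  shows "\<bar>m\<bar> \<le> \<bar>a\<bar>" "\<bar>n\<bar> \<le> \<bar>b\<bar>"
proof -
  have "m dvd a * n^k" "n dvd b * m^l" using assms(2,3) by simp_all
  then have "m dvd a" "n dvd b" using assms(1)
    by (simp_all add: coprime_dvd_mult_left_iff coprime_commute)
  then show "\<bar>m\<bar> \<le> \<bar>a\<bar>" "\<bar>n\<bar> \<le> \<bar>b\<bar>" using assms(4,5) by (simp_all add: dvd_imp_le_int)
qed

lemma not_units_F1_F2:
  assumes "n > 0" "m + n \<noteq> 0" "m \<noteq> 0"
  shows "\<not> (is_unit (F1 m n) \<and> is_unit (F2 m n))"
proof -
  have "F1 m n - F2 m n = 2 * n * (m^2 + m*n + n^2)" "F1 m n + F2 m n = 2 * m^2 * (m + n)"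
    unfolding F1_def F2_def by algebra+
  with assms pos_definite_quadratic[of n m] show ?thesis
    using int_units_eq_power_or_neg_power[of "F1 m n" "F2 m n" 1] by auto
qed

lemma not_units_F1_F3:
  assumes "n > 0" "m + n \<noteq> 0" "m \<noteq> 0"
  shows "\<not> (is_unit (F1 m n) \<and> is_unit (F3 m n))"
proof -
  have "F1 m n - F3 m n = - 2 * m * n^2" "F1 m n + F3 m n = 2 * (m + n) * (m^2 + m*n + n^2)"
    unfolding F1_def F3_def by algebra+
  with assms pos_definite_quadratic[of n m] show ?thesis
    using int_units_eq_power_or_neg_power[of "F1 m n" "F3 m n" 1] by auto
qed

lemma not_units_F2_F3:
  assumes "n > 0" "m + n \<noteq> 0" "m \<noteq> 0"
  shows "\<not> (is_unit (F2 m n) \<and> is_unit (F3 m n))"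
proof -
  have "F2 m n - F3 m n = - 2 * n * (m + n)^2" "F2 m n + F3 m n = 2 * m * (m^2 + m*n + n^2)"
    unfolding F2_def F3_def by algebra+
  with assms pos_definite_quadratic[of n m] show ?thesis
    using int_units_eq_power_or_neg_power[of "F2 m n" "F3 m n" 1] by auto
qed

lemma not_units_F1_G:
  assumes "coprime m n" "n > 0" "m + n \<noteq> 0" "m \<noteq> 0"
  shows "\<not> (is_unit (F1 m n) \<and> is_unit (G m n))"
proof
  assume "is_unit (F1 m n) \<and> is_unit (G m n)"
  then consider "G m n = F1 m n ^ 3" | "G m n = - (F1 m n ^ 3)"
    using int_units_eq_power_or_neg_power by blast
  then show False
  proof cases
    case 1
    define R where "R = - (2*m^8) - 8*m^7*n - 16*m^6*n^2 - 32*m^5*n^3 - 46*m^4*n^4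
      - 24*m^3*n^5 + 10*m^2*n^6 + 12*m*n^7 + 4*n^8"
    have "G m n - F1 m n ^ 3 = m * R" unfolding R_def G_def F1_def by algebra
    with \<open>G m n = F1 m n ^ 3\<close> assms have "R = 0" by simp
    then have "4 * n^8 = m * (2*m^7 + 8*m^6*n + 16*m^5*n^2
        + 32*m^4*n^3 + 46*m^3*n^4 + 24*m^2*n^5 - 10*m*n^6 - 12*n^7)"
      "(-2) * m^8 = n * (8*m^7 + 16*m^6*n + 32*m^5*n^2
        + 46*m^4*n^3 + 24*m^3*n^4 - 10*m^2*n^5 - 12*m*n^6 - 4*n^7)"
      unfolding R_def by algebra+
    from coprime_form_zero_bound[OF assms(1) this] have "\<bar>m\<bar> \<le> 4" "\<bar>n\<bar> \<le> 2"
      by simp_all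
    then have "m \<in> {-4, -3, -2, -1, 0, 1, 2, 3, 4}" "n \<in> {1, 2}" using assms(2) by auto
    with \<open>R = 0\<close> show False unfolding R_def by auto
  next
    case 2
    define R where "R = 4*m^7 + 10*m^6*n + 4*m^5*n^2 + 4*m^4*n^3 + 20*m^3*n^4
      + 22*m^2*n^5 + 8*m*n^6 + 2*n^7"
    have "G m n + F1 m n ^ 3 = (m + n) * n * R" unfolding R_def G_def F1_def by algebra
    with \<open>G m n = - (F1 m n ^ 3)\<close> assms have "R = 0" by simp
    then have "2 * n^7 = m * (- (4*m^6) - 10*m^5*n - 4*m^4*n^2
        - 4*m^3*n^3 - 20*m^2*n^4 - 22*m*n^5 - 8*n^6)"
      "4 * m^7 = n * (- (10*m^6) - 4*m^5*n - 4*m^4*n^2 - 20*m^3*n^3 - 22*m^2*n^4 - 8*m*n^5 - 2*n^6)"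
      unfolding R_def by algebra+
    from coprime_form_zero_bound[OF assms(1) this] have "\<bar>m\<bar> \<le> 2" "\<bar>n\<bar> \<le> 4"
      by simp_all
    then have "m \<in> {-2, -1, 0, 1, 2}" "n \<in> {1, 2, 3, 4}" using assms(2) by auto
    with \<open>R = 0\<close> show False unfolding R_def by auto
  qed
qed

lemma not_units_F2_G:
  assumes "coprime m n" "n > 0" "m + n \<noteq> 0" "m \<noteq> 0"
  shows "\<not> (is_unit (F2 m n) \<and> is_unit (G m n))"
proof
  assume "is_unit (F2 m n) \<and> is_unit (G m n)"
  then consider "G m n = F2 m n ^ 3" | "G m n = - (F2 m n ^ 3)"
    using int_units_eq_power_or_neg_power by blast
  then show False
  proof cases
    case 1
    define R where "R = - (2*m^8) + 2*m^6*n^2 - 8*m^5*n^3 - 14*m^4*n^4 + 8*m^3*n^5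
      + 16*m^2*n^6 + 8*m*n^7 + 2*n^8"
    have "G m n - F2 m n ^ 3 = (m + n) * R" unfolding R_def G_def F2_def by algebra
    with \<open>G m n = F2 m n ^ 3\<close> assms have "R = 0" by simp
    then have "2 * n^8 = m * (2*m^7 - 2*m^5*n^2 + 8*m^4*n^3
        + 14*m^3*n^4 - 8*m^2*n^5 - 16*m*n^6 - 8*n^7)"
      "(-2) * m^8 = n * (- (2*m^6*n) + 8*m^5*n^2 + 14*m^4*n^3
        - 8*m^3*n^4 - 16*m^2*n^5 - 8*m*n^6 - 2*n^7)"
      unfolding R_def by algebra+
    from coprime_form_zero_bound[OF assms(1) this] have "\<bar>m\<bar> \<le> 2" "\<bar>n\<bar> \<le> 2"
      by simp_all
    then have "m \<in> {-2, -1, 0, 1, 2}" "n \<in> {1, 2}" using assms(2) by auto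
    with \<open>R = 0\<close> show False unfolding R_def by auto
  next
    case 2
    define R where "R = - (2*m^7) - 4*m^6*n - 12*m^5*n^2 - 16*m^4*n^3 + 6*m^3*n^4
      + 28*m^2*n^5 + 18*m*n^6 + 4*n^7"
    have "G m n + F2 m n ^ 3 = m * n * R" unfolding R_def G_def F2_def by algebra
    with \<open>G m n = - (F2 m n ^ 3)\<close> assms have "R = 0" by simp
    then have "4 * n^7 = m * (2*m^6 + 4*m^5*n + 12*m^4*n^2
        + 16*m^3*n^3 - 6*m^2*n^4 - 28*m*n^5 - 18*n^6)"
      "(-2) * m^7 = n * (4*m^6 + 12*m^5*n + 16*m^4*n^2 - 6*m^3*n^3 - 28*m^2*n^4 - 18*m*n^5 - 4*n^6)"
      unfolding R_def by algebra+
    from coprime_form_zero_bound[OF assms(1) this] have "\<bar>m\<bar> \<le> 4" "\<bar>n\<bar> \<le> 2"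
      by simp_all
    then have "m \<in> {-4, -3, -2, -1, 0, 1, 2, 3, 4}" "n \<in> {1, 2}" using assms(2) by auto
    with \<open>R = 0\<close> show False unfolding R_def by auto
  qed
qed

lemma not_units_F3_G:
  assumes "coprime m n" "n > 0" "m + n \<noteq> 0" "m \<noteq> 0"
  shows "\<not> (is_unit (F3 m n) \<and> is_unit (G m n))"
proof
  assume "is_unit (F3 m n) \<and> is_unit (G m n)"
  then consider "G m n = F3 m n ^ 3" | "G m n = - (F3 m n ^ 3)"
    using int_units_eq_power_or_neg_power by blast
  then show False
  proof cases
    case 1
    define R where "R = - (2*m^7) - 6*m^6*n - 16*m^5*n^2 - 40*m^4*n^3 - 54*m^3*n^4
      - 30*m^2*n^5 - 10*m*n^6 - 2*n^7"
    have "G m n - F3 m n ^ 3 = m * (m + n) * R" unfolding R_def G_def F3_def by algebra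
    with \<open>G m n = F3 m n ^ 3\<close> assms have "R = 0" by simp
    then have "(-2) * n^7 = m * (2*m^6 + 6*m^5*n + 16*m^4*n^2
        + 40*m^3*n^3 + 54*m^2*n^4 + 30*m*n^5 + 10*n^6)"
      "(-2) * m^7 = n * (6*m^6 + 16*m^5*n + 40*m^4*n^2
        + 54*m^3*n^3 + 30*m^2*n^4 + 10*m*n^5 + 2*n^6)"
      unfolding R_def by algebra+
    from coprime_form_zero_bound[OF assms(1) this] have "\<bar>m\<bar> \<le> 2" "\<bar>n\<bar> \<le> 2"
      by simp_all
    then have "m \<in> {-2, -1, 0, 1, 2}" "n \<in> {1, 2}" using assms(2) by auto
    with \<open>R = 0\<close> show False unfolding R_def by auto
  next
    case 2
    define R where "R = 4*m^8 + 20*m^7*n + 38*m^6*n^2 + 56*m^5*n^3 + 84*m^4*n^4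
      + 92*m^3*n^5 + 54*m^2*n^6 + 16*m*n^7 + 2*n^8"
    have "G m n + F3 m n ^ 3 = n * R" unfolding R_def G_def F3_def by algebra
    with \<open>G m n = - (F3 m n ^ 3)\<close> assms have "R = 0" by simp
    then have "2 * n^8 = m * (- (4*m^7) - 20*m^6*n - 38*m^5*n^2
        - 56*m^4*n^3 - 84*m^3*n^4 - 92*m^2*n^5 - 54*m*n^6 - 16*n^7)"
      "4 * m^8 = n * (- (20*m^7) - 38*m^6*n - 56*m^5*n^2
        - 84*m^4*n^3 - 92*m^3*n^4 - 54*m^2*n^5 - 16*m*n^6 - 2*n^7)"
      unfolding R_def by algebra+
    from coprime_form_zero_bound[OF assms(1) this] have "\<bar>m\<bar> \<le> 2" "\<bar>n\<bar> \<le> 4"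
      by simp_all
    then have "m \<in> {-2, -1, 0, 1, 2}" "n \<in> {1, 2, 3, 4}" using assms(2) by auto
    with \<open>R = 0\<close> show False unfolding R_def by auto
  qed
qed

lemma three_prime_divisors:
  fixes x y z N :: int
  assumes "\<not> is_unit x" "\<not> is_unit y" "\<not> is_unit z"
    and "coprime x y" "coprime x z" "coprime y z"
    and "x dvd N" "y dvd N" "z dvd N"
  obtains p q r where "prime p" "prime q" "prime r" "p \<noteq> q" "p \<noteq> r" "q \<noteq> r"
    "p dvd N" "q dvd N" "r dvd N"
proof -
  have "x \<noteq> 0" "y \<noteq> 0" "z \<noteq> 0" using assms(1-6) by auto
  then obtain p q r where pqr: "prime p" "prime q" "prime r" and "p dvd x" "q dvd y" "r dvd z"
    using prime_divisor_exists[of x] prime_divisor_exists[of y] prime_divisor_exists[of z] assms(1-3)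
    by metis
  moreover have "\<not> is_unit p" "\<not> is_unit q" "\<not> is_unit r"
    using pqr not_prime_unit by blast+
  ultimately have "p \<noteq> q" "p \<noteq> r" "q \<noteq> r"
    using coprime_common_divisor[OF assms(4)] coprime_common_divisor[OF assms(5)]
      coprime_common_divisor[OF assms(6)] by metis+
  moreover have "p dvd N" "q dvd N" "r dvd N"
    using \<open>p dvd x\<close> \<open>q dvd y\<close> \<open>r dvd z\<close> assms(7-9) by (blast intro: dvd_trans)+
  ultimately show ?thesis using pqr that by blast
qed

lemma three_prime_divisors_of_product:
  fixes a b c d :: int
  assumes "coprime a b" "coprime a c" "coprime a d" "coprime b c" "coprime b d" "coprime c d"
    and "\<not> (is_unit a \<and> is_unit b)" "\<not> (is_unit a \<and> is_unit c)" "\<not> (is_unit a \<and> is_unit d)"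
      "\<not> (is_unit b \<and> is_unit c)" "\<not> (is_unit b \<and> is_unit d)" "\<not> (is_unit c \<and> is_unit d)"
  obtains p q r where "prime p" "prime q" "prime r" "p \<noteq> q" "p \<noteq> r" "q \<noteq> r"
    "p dvd a * b * c * d" "q dvd a * b * c * d" "r dvd a * b * c * d"
proof -
  have dvd: "a dvd a * b * c * d" "b dvd a * b * c * d" "c dvd a * b * c * d" "d dvd a * b * c * d"
    by (simp_all add: mult.assoc mult.left_commute)
  consider "\<not> is_unit b" "\<not> is_unit c" "\<not> is_unit d" | "\<not> is_unit a" "\<not> is_unit c" "\<not> is_unit d"
    | "\<not> is_unit a" "\<not> is_unit b" "\<not> is_unit d" | "\<not> is_unit a" "\<not> is_unit b" "\<not> is_unit c"
    using assms(7-12) by blast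
  then show ?thesis
  proof cases
    case 1
    then show ?thesis using that by (rule three_prime_divisors[OF _ _ _ assms(4,5,6) dvd(2,3,4)])
  next
    case 2
    then show ?thesis using that by (rule three_prime_divisors[OF _ _ _ assms(2,3,6) dvd(1,3,4)])
  next
    case 3
    then show ?thesis using that by (rule three_prime_divisors[OF _ _ _ assms(1,3,5) dvd(1,2,4)])
  next
    case 4
    then show ?thesis using that by (rule three_prime_divisors[OF _ _ _ assms(1,2,4) dvd(1,2,3)])
  qed
qed

theorem corollary2:
  fixes c :: rat
  assumes "has_rational_3_cycle c"
  shows "\<exists>p q r :: int. prime p \<and> prime q \<and> prime r \<and> p \<noteq> q \<and> p \<noteq> r \<and> q \<noteq> r \<and>
           p dvd rat_numerator (c ^ 3 + 2 * c ^ 2 + c + 1) \<and>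
           q dvd rat_numerator (c ^ 3 + 2 * c ^ 2 + c + 1) \<and>
           r dvd rat_numerator (c ^ 3 + 2 * c ^ 2 + c + 1)"
proof -
  obtain m n where mn: "coprime m n" "n > 0" "m + n \<noteq> 0" "m \<noteq> 0"
    and c: "of_int (c_den m n) * c = - of_int (c_num m n)"
    using rational_3_cycle_integer_parametrization[OF assms] by blast
  define A where "A = F1 m n * F2 m n * F3 m n * G m n"
  have "coprime A (c_den m n ^ 3)"
    using coprime_c_den(2) coprime_F1 coprime_F2 coprime_F3 coprime_G mn(1) unfolding A_def by simp
  moreover have "c_den m n \<noteq> 0" using mn unfolding c_den_def by simp
  ultimately have "A dvd rat_numerator (c ^ 3 + 2 * c ^ 2 + c + 1)"
    unfolding A_def by (intro dvd_rat_numerator[OF cycle_cubic_factorization[OF c]]) simp_all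
  moreover obtain p q r where "prime p" "prime q" "prime r" "p \<noteq> q" "p \<noteq> r" "q \<noteq> r"
    "p dvd A" "q dvd A" "r dvd A"
    unfolding A_def
    by (rule three_prime_divisors_of_product[OF coprime_F1_F2[OF mn(1)] coprime_F1_F3[OF mn(1)]
          coprime_F1_G[OF mn(1)] coprime_F2_F3[OF mn(1)] coprime_F2_G[OF mn(1)] coprime_F3_G[OF mn(1)]
          not_units_F1_F2[OF mn(2-4)] not_units_F1_F3[OF mn(2-4)] not_units_F1_G[OF mn]
          not_units_F2_F3[OF mn(2-4)] not_units_F2_G[OF mn] not_units_F3_G[OF mn]])
  ultimately show ?thesis by (blast intro: dvd_trans)
qed

end
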